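(* Let $s,t$ be positive integers with $\gcd(s,t)=1$, and define the quadratic polynomials $$A=x^2-(3s+t)(3s+2t),\qquad B=x^2-6s\,x+(3s-2t)(3s+t),\qquad C=x^2+6(s+t)\,x+(3s+2t)(3s+5t).$$ Let $P=A^{2s+t}$ and $Q=B^{s+t}C^{s}$ (both of degree $n=4s+2t$). Then $$\deg(P-Q)\le n-5.$$
   Context: This is the Davenport–Zannier pair for the "fork" weighted tree (two black vertices of degree $2s+t$, two white vertices of degree $s+t$, two white vertices of degree $s$); $n-5=(n+1)-(p+q)$ with $p=2$, $q=4$ is the minimal possible degree of $P-Q$. *)

theory Defs
  imports "HOL-Computational_Algebra.Polynomial"
begin

end

theory Submission
  imports Defs
begin

text \<open>
  The Wronskian \<open>W(P, Q) = P' Q - P Q'\<close> of \<open>P = A\<^sup>m\<close> and \<open>Q = B\<^sup>k C\<^sup>s\<close> (\<open>m = k + s\<close>) factors as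
  \<open>A\<^sup>m\<^sup>-\<^sup>1 B\<^sup>k\<^sup>-\<^sup>1 C\<^sup>s\<^sup>-\<^sup>1 (m A' B C - k A B' C - s A B C')\<close>, and for the three given quadratics the
  last factor is a constant, so \<open>deg W \<le> 4m - 6\<close>. On the other hand \<open>W(P, Q) = W(P - Q, Q)\<close>, and
  since \<open>P\<close> and \<open>Q\<close> are monic of degree \<open>2m\<close>, the leading terms of \<open>W(P - Q, Q)\<close> do not cancel
  when \<open>0 < deg (P - Q) < 2m\<close>: \<open>deg W = deg (P - Q) + 2m - 1\<close>.
\<close>

lemma degree_wronskian_ge:
  fixes D Q :: "'a::{idom, ring_char_0} poly"
  assumes "0 < degree D" and "degree D < degree Q"
  shows "degree D + degree Q - 1 \<le> degree (pderiv D * Q - D * pderiv Q)"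
proof -
  let ?d = "degree D" and ?n = "degree Q"
  have "coeff (pderiv D * Q) (degree (pderiv D) + ?n) = lead_coeff (pderiv D) * lead_coeff Q"
    by (rule coeff_mult_degree_sum)
  then have left: "coeff (pderiv D * Q) (?d + ?n - 1) = of_nat ?d * lead_coeff D * lead_coeff Q"
    using assms by (simp add: degree_pderiv coeff_pderiv)
  have "coeff (D * pderiv Q) (?d + degree (pderiv Q)) = lead_coeff D * lead_coeff (pderiv Q)"
    by (rule coeff_mult_degree_sum)
  then have right: "coeff (D * pderiv Q) (?d + ?n - 1) = of_nat ?n * lead_coeff D * lead_coeff Q"
    using assms by (simp add: degree_pderiv coeff_pderiv)
  have "D \<noteq> 0" "Q \<noteq> 0" using assms by auto
  moreover have "(of_nat ?d :: 'a) \<noteq> of_nat ?n" using assms by simp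
  ultimately have "coeff (pderiv D * Q - D * pderiv Q) (?d + ?n - 1) \<noteq> 0"
    using left right by (simp add: left_diff_distrib [symmetric])
  then show ?thesis by (rule le_degree)
qed

lemma degree_diff_le_by_wronskian:
  fixes P Q :: "'a::{idom, ring_char_0} poly"
  assumes "degree P = degree Q" and "lead_coeff P = lead_coeff Q"
    and "degree (pderiv P * Q - P * pderiv Q) \<le> w"
  shows "degree (P - Q) \<le> w + 1 - degree Q"
proof (cases "degree (P - Q) = 0")
  case False
  have "coeff (P - Q) (degree Q) = 0" using assms by simp
  moreover have "degree (P - Q) \<le> degree Q" using assms by (metis degree_diff_le order_refl)
  ultimately have "degree (P - Q) < degree Q"
    using False by (metis le_neq_implies_less leading_coeff_0_iff degree_0)
  then have "degree (P - Q) + degree Q - 1 \<le> degree (pderiv (P - Q) * Q - (P - Q) * pderiv Q)"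
    using False by (intro degree_wronskian_ge) auto
  also have "pderiv (P - Q) * Q - (P - Q) * pderiv Q = pderiv P * Q - P * pderiv Q"
    by (simp add: pderiv_diff algebra_simps)
  finally show ?thesis using assms(3) False by linarith
qed simp

lemma wronskian_power_factor:
  fixes A B C :: "'a::idom poly"
  assumes "0 < k" and "0 < s"
  shows "pderiv (A ^ (k + s)) * (B ^ k * C ^ s) - A ^ (k + s) * pderiv (B ^ k * C ^ s)
    = A ^ (k + s - 1) * B ^ (k - 1) * C ^ (s - 1) *
      (smult (of_nat (k + s)) (pderiv A * B * C) - smult (of_nat k) (A * pderiv B * C)
        - smult (of_nat s) (A * B * pderiv C))"
proof -
  obtain k' s' where "k = Suc k'" "s = Suc s'" using assms by (metis gr0_implies_Suc)
  then show ?thesis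
    by (simp add: pderiv_mult pderiv_power_Suc del: power_Suc) (simp add: algebra_simps)
qed

lemma degree_diff_power_quadratics:
  fixes A B C :: "'a::{idom, ring_char_0} poly"
  assumes "0 < k" and "0 < s"
    and deg: "degree A = 2" "degree B = 2" "degree C = 2"
    and lead: "lead_coeff A = 1" "lead_coeff B = 1" "lead_coeff C = 1"
    and const: "smult (of_nat (k + s)) (pderiv A * B * C) - smult (of_nat k) (A * pderiv B * C)
           - smult (of_nat s) (A * B * pderiv C) = [:c:]"
  shows "degree (A ^ (k + s) - B ^ k * C ^ s) \<le> 2 * (k + s) - 5"
proof -
  let ?P = "A ^ (k + s)" and ?Q = "B ^ k * C ^ s"
  let ?X = "A ^ (k + s - 1) * B ^ (k - 1) * C ^ (s - 1)"
  have "degree ?X \<le> degree (A ^ (k + s - 1)) + degree (B ^ (k - 1)) + degree (C ^ (s - 1))"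
    by (meson add_right_mono degree_mult_le order_trans)
  also have "\<dots> \<le> 2 * (k + s - 1) + 2 * (k - 1) + 2 * (s - 1)"
    using deg degree_power_le [of A "k + s - 1"] degree_power_le [of B "k - 1"]
      degree_power_le [of C "s - 1"]
    by (simp add: mult.commute)
  also have "\<dots> = 4 * (k + s) - 6"
    using assms(1,2) by (cases k; cases s) simp_all
  finally have "degree (?X * [:c:]) \<le> 4 * (k + s) - 6"
    using degree_mult_le [of ?X "[:c:]"] by simp
  then have "degree (pderiv ?P * ?Q - ?P * pderiv ?Q) \<le> 4 * (k + s) - 6"
    using assms(1,2) const by (simp add: wronskian_power_factor)
  moreover have "A \<noteq> 0" "B \<noteq> 0" "C \<noteq> 0" using deg by auto
  then have "degree ?P = 2 * (k + s)" "degree ?Q = 2 * (k + s)"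
    using deg by (simp_all add: degree_power_eq degree_mult_eq)
  moreover have "lead_coeff ?P = lead_coeff ?Q"
    using lead by (simp add: lead_coeff_power lead_coeff_mult)
  ultimately have "degree (?P - ?Q) \<le> 4 * (k + s) - 6 + 1 - 2 * (k + s)"
    using degree_diff_le_by_wronskian [of ?P ?Q "4 * (k + s) - 6"] by simp
  also have "\<dots> = 2 * (k + s) - 5"
    using assms(1,2) by (cases k; cases s) simp_all
  finally show ?thesis .
qed

theorem mainTheorem2:
  fixes s t :: nat
  assumes "s > 0" and "t > 0" and "gcd s t = 1"
  shows "let si = int s; ti = int t;
             A = [: - ((3*si + ti) * (3*si + 2*ti)), 0, 1 :];
             B = [: (3*si - 2*ti) * (3*si + ti), - 6*si, 1 :];
             C = [: (3*si + 2*ti) * (3*si + 5*ti), 6*(si + ti), 1 :];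
             P = A ^ (2*s + t);
             Q = B ^ (s + t) * C ^ s
         in degree (P - Q) \<le> 4*s + 2*t - 5"
proof -
  define si ti where "si = int s" and "ti = int t"
  define A where "A = [: - ((3*si + ti) * (3*si + 2*ti)), 0, 1 :]"
  define B where "B = [: (3*si - 2*ti) * (3*si + ti), - 6*si, 1 :]"
  define C where "C = [: (3*si + 2*ti) * (3*si + 5*ti), 6*(si + ti), 1 :]"
  have "\<exists>c. smult (of_nat ((s + t) + s)) (pderiv A * B * C) - smult (of_nat (s + t)) (A * pderiv B * C)
          - smult (of_nat s) (A * B * pderiv C) = [:c:]"
    unfolding A_def B_def C_def si_def ti_def
    by (simp add: pderiv_pCons algebra_simps) (metis diff_add_cancel)
  then obtain c where const:
    "smult (of_nat ((s + t) + s)) (pderiv A * B * C) - smult (of_nat (s + t)) (A * pderiv B * C)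
       - smult (of_nat s) (A * B * pderiv C) = [:c:]" ..
  have "degree (A ^ ((s + t) + s) - B ^ (s + t) * C ^ s) \<le> 2 * ((s + t) + s) - 5"
    by (rule degree_diff_power_quadratics [OF _ _ _ _ _ _ _ _ const])
      (use assms in \<open>simp_all add: A_def B_def C_def\<close>)
  moreover have "(s + t) + s = 2 * s + t" "2 * (2 * s + t) = 4 * s + 2 * t" by simp_all
  ultimately show ?thesis
    unfolding Let_def A_def B_def C_def si_def ti_def by argo
qed

end
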